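(* Let $\sigma\in\{1,-1\}$, $n\ge 2$, $m_1,\dots,m_n>0$, $M=\sum_{j=1}^n m_j$, and let $q_k(t)=p(t+k)$, $k=1,\dots,n$, be an equally spaced choreographic solution, with $p$ of period $n$, of $$\ddot q_k=\sum_{j=1,\,j\neq k}^{n}\frac{m_j\big(q_j-\sigma(q_k\odot q_j)q_k\big)}{\big(\sigma-\sigma(q_k\odot q_j)^2\big)^{3/2}}-\sigma(\dot q_k\odot\dot q_k)q_k,\qquad k\in\{1,\dots,n\}.$$ Then for all $k\in\{1,\dots,n\}$ and all $t$, $$0=\sum_{j=1}^{n-1}\frac{\left(m_{j+k}-\frac Mn\right)\Big(p(t+j)-\sigma\big(p(t+j)\odot p(t)\big)p(t)\Big)}{\Big(\sigma-\sigma\big(p(t+j)\odot p(t)\big)^2\Big)^{3/2}}.$$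
   Context: $\mathbb{M}^2_\sigma=\{(x_1,x_2,x_3)\in\mathbb{R}^3: x_1^2+x_2^2+\sigma x_3^2=\sigma\}$ and $x\odot y=x_1y_1+x_2y_2+\sigma x_3y_3$; $p:\mathbb{R}\to\mathbb{M}^2_\sigma$ is twice continuously differentiable. Masses are indexed cyclically: $m_{k+Kn}=m_k$ for $k\in\{1,\dots,n\}$, $K\in\mathbb{Z}$. (Equal spacing has been normalized so that $h_{k+1}-h_k=1$ and the period of $p$ is $n$.) *)

theory Defs
  imports "HOL-Analysis.Analysis"
begin

definition odot :: "real \<Rightarrow> real^3 \<Rightarrow> real^3 \<Rightarrow> real" where
  "odot \<sigma> x y = x$1 * y$1 + x$2 * y$2 + \<sigma> * x$3 * y$3"

definition Msurf :: "real \<Rightarrow> (real^3) set" where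
  "Msurf \<sigma> = {x. (x$1)^2 + (x$2)^2 + \<sigma> * (x$3)^2 = \<sigma>}"

text \<open>Cyclic indexing of masses: m_{k+Kn} = m_k for k in 1..n (used for indices >= 1).\<close>
definition mcyc :: "nat \<Rightarrow> (nat \<Rightarrow> real) \<Rightarrow> nat \<Rightarrow> real" where
  "mcyc n m i = m ((i - 1) mod n + 1)"

end

theory Submission
  imports Defs
begin

text \<open>Evaluating the equation of body \<open>k\<close> at time \<open>s - k\<close> and using the \<open>n\<close>-periodicity of \<open>p\<close>
  expresses \<open>p'' s + \<sigma> (p' s \<odot> p' s) p s\<close> as a sum over the relative positions \<open>p (s + l)\<close>,
  \<open>1 \<le> l < n\<close>, weighted by the cyclically shifted masses \<open>m (l + k)\<close>. The left-hand side does
  not depend on \<open>k\<close>, so neither does this weighted sum; averaging it over the \<open>n\<close> shifts \<open>k\<close>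
  replaces every weight by the mean mass \<open>M / n\<close>, and subtracting gives the identity.\<close>

definition attraction :: "real \<Rightarrow> real^3 \<Rightarrow> real^3 \<Rightarrow> real^3" where
  "attraction \<sigma> x y =
     inverse ((\<sigma> - \<sigma> * (odot \<sigma> x y)^2) powr (3/2)) *\<^sub>R (y - (\<sigma> * odot \<sigma> x y) *\<^sub>R x)"

lemma odot_commute: "odot \<sigma> x y = odot \<sigma> y x"
  by (simp add: odot_def algebra_simps)

lemma scaleR_attraction:
  "(c / (\<sigma> - \<sigma> * (odot \<sigma> x y)^2) powr (3/2)) *\<^sub>R (y - (\<sigma> * odot \<sigma> x y) *\<^sub>R x)
     = c *\<^sub>R attraction \<sigma> x y"
  by (simp only: attraction_def divide_inverse scaleR_scaleR)

lemma sum_periodic_window: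
  fixes f :: "nat \<Rightarrow> 'a::ab_group_add"
  assumes periodic: "\<And>i. 0 < i \<Longrightarrow> f (i + n) = f i"
  shows "(\<Sum>k=1..n. f (l + k)) = (\<Sum>k=1..n. f k)"
proof (induction l)
  case (Suc l)
  have "f (l + 1) + (\<Sum>k=Suc 1..Suc n. f (l + k)) = (\<Sum>k=1..Suc n. f (l + k))"
    by (rule sum.atLeast_Suc_atMost[symmetric]) simp
  also have "\<dots> = (\<Sum>k=1..n. f (l + k)) + f (l + 1)"
    using periodic[of "l + 1"] by simp
  finally have "(\<Sum>k=Suc 1..Suc n. f (l + k)) = (\<Sum>k=1..n. f (l + k))"
    by simp
  moreover have "(\<Sum>k=1..n. f (Suc l + k)) = (\<Sum>k=Suc 1..Suc n. f (l + k))"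
    by (subst sum.shift_bounds_cl_Suc_ivl) simp
  ultimately show ?case
    using Suc.IH by simp
qed simp

lemma sum_remove_periodic:
  fixes g :: "nat \<Rightarrow> 'a::ab_group_add"
  assumes periodic: "\<And>i. 0 < i \<Longrightarrow> g (i + n) = g i"
    and k: "k \<in> {1..n}"
  shows "(\<Sum>j\<in>{1..n} - {k}. g j) = (\<Sum>l=1..n-1. g (l + k))"
proof -
  have "(\<Sum>l=1..n-1. g (l + k)) + g k = (\<Sum>l=0..n-1. g (l + k))"
    by (simp add: sum.atLeast_Suc_atMost)
  also have "\<dots> = (\<Sum>l=1..n. g ((k - 1) + l))"
  proof -
    obtain n' where n': "n = Suc n'"
      using k by (cases n) auto
    have "(\<Sum>l=1..Suc n'. g ((k - 1) + l)) = (\<Sum>l=0..n'. g ((k - 1) + Suc l))"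
      unfolding One_nat_def by (rule sum.shift_bounds_cl_Suc_ivl)
    also have "\<dots> = (\<Sum>l=0..n'. g (l + k))"
      using k by (intro sum.cong) (auto simp: add.commute)
    finally show ?thesis
      using n' by simp
  qed
  also have "\<dots> = (\<Sum>j=1..n. g j)"
    using periodic by (rule sum_periodic_window)
  finally show ?thesis
    using k by (simp add: sum_diff1 algebra_simps)
qed

lemma mcyc_eq: "j \<in> {1..n} \<Longrightarrow> mcyc n m j = m j"
  by (auto simp: mcyc_def)

text \<open>The restriction \<open>0 < i\<close> is needed: truncated subtraction gives \<open>mcyc n m 0 = m 1\<close>.\<close>

lemma mcyc_periodic:
  assumes "0 < i"
  shows "mcyc n m (i + n) = mcyc n m i"
proof -
  have "i + n - 1 = (i - 1) + n"
    using assms by simp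
  then show ?thesis
    by (simp add: mcyc_def)
qed

lemma sum_mcyc_window: "(\<Sum>k=1..n. mcyc n m (l + k)) = (\<Sum>i=1..n. m i)"
proof -
  have "(\<Sum>k=1..n. mcyc n m (l + k)) = (\<Sum>k=1..n. mcyc n m k)"
    using mcyc_periodic by (rule sum_periodic_window)
  also have "\<dots> = (\<Sum>i=1..n. m i)"
    by (intro sum.cong) (simp_all add: mcyc_eq)
  finally show ?thesis .
qed

lemma sum_centered_shifted_weights_eq_0:
  fixes w :: "nat \<Rightarrow> real" and G :: "nat \<Rightarrow> 'a::real_vector"
  assumes n: "0 < n"
    and shift_invariant: "\<And>k. k \<in> {1..n} \<Longrightarrow> (\<Sum>l\<in>L. w (l + k) *\<^sub>R G l) = v"
    and window: "\<And>l. (\<Sum>k=1..n. w (l + k)) = W"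
    and k: "k \<in> {1..n}"
  shows "(\<Sum>l\<in>L. (w (l + k) - W / real n) *\<^sub>R G l) = 0"
proof -
  have "real n *\<^sub>R v = (\<Sum>k=1..n. v)"
    by (simp add: sum_constant_scaleR)
  also have "\<dots> = (\<Sum>k=1..n. \<Sum>l\<in>L. w (l + k) *\<^sub>R G l)"
    using shift_invariant by (intro sum.cong) simp_all
  also have "\<dots> = (\<Sum>l\<in>L. (\<Sum>k=1..n. w (l + k)) *\<^sub>R G l)"
    unfolding scaleR_sum_left by (rule sum.swap)
  also have "\<dots> = W *\<^sub>R (\<Sum>l\<in>L. G l)"
    by (simp only: window scaleR_sum_right)
  finally have nv: "real n *\<^sub>R v = W *\<^sub>R (\<Sum>l\<in>L. G l)" .
  have "v = inverse (real n) *\<^sub>R (real n *\<^sub>R v)"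
    using n by simp
  also have "\<dots> = (W / real n) *\<^sub>R (\<Sum>l\<in>L. G l)"
    by (simp add: nv divide_inverse mult.commute)
  finally have "v = (W / real n) *\<^sub>R (\<Sum>l\<in>L. G l)" .
  then show ?thesis
    using shift_invariant[OF k]
    by (simp add: scaleR_diff_left sum_subtractf scaleR_sum_right)
qed

lemma choreography_acceleration:
  fixes p p' p'' :: "real \<Rightarrow> real^3"
  assumes period: "\<And>t. p (t + real n) = p t"
    and ode: "\<And>t k. k \<in> {1..n} \<Longrightarrow>
        p'' (t + real k) =
          (\<Sum>j\<in>{1..n} - {k}.
             (m j / (\<sigma> - \<sigma> * (odot \<sigma> (p (t + real k)) (p (t + real j)))^2) powr (3/2)) *\<^sub>R
             (p (t + real j) - (\<sigma> * odot \<sigma> (p (t + real k)) (p (t + real j))) *\<^sub>R p (t + real k)))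
          - (\<sigma> * odot \<sigma> (p' (t + real k)) (p' (t + real k))) *\<^sub>R p (t + real k)"
    and k: "k \<in> {1..n}"
  shows "p'' s + (\<sigma> * odot \<sigma> (p' s) (p' s)) *\<^sub>R p s
           = (\<Sum>l=1..n-1. mcyc n m (l + k) *\<^sub>R attraction \<sigma> (p s) (p (s + real l)))"
proof -
  define g where "g j = mcyc n m j *\<^sub>R attraction \<sigma> (p s) (p (s - real k + real j))" for j
  have g_periodic: "g (i + n) = g i" if "0 < i" for i
  proof -
    have "p (s - real k + real (i + n)) = p (s - real k + real i)"
      using period[of "s - real k + real i"] by (simp add: add.assoc)
    then show ?thesis
      using mcyc_periodic[OF that] by (simp add: g_def)
  qed
  have "p'' s + (\<sigma> * odot \<sigma> (p' s) (p' s)) *\<^sub>R p s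
          = (\<Sum>j\<in>{1..n} - {k}. m j *\<^sub>R attraction \<sigma> (p s) (p (s - real k + real j)))"
    using ode[OF k, of "s - real k"] by (simp add: scaleR_attraction)
  also have "\<dots> = (\<Sum>j\<in>{1..n} - {k}. g j)"
    unfolding g_def by (intro sum.cong) (simp_all add: mcyc_eq)
  also have "\<dots> = (\<Sum>l=1..n-1. g (l + k))"
    using g_periodic k by (rule sum_remove_periodic)
  also have "\<dots> = (\<Sum>l=1..n-1. mcyc n m (l + k) *\<^sub>R attraction \<sigma> (p s) (p (s + real l)))"
    by (simp add: g_def)
  finally show ?thesis .
qed

theorem lemma3:
  fixes \<sigma> :: real and n :: nat and m :: "nat \<Rightarrow> real"
    and p p' p'' :: "real \<Rightarrow> real^3"
  assumes sigma: "\<sigma> = 1 \<or> \<sigma> = -1"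
    and n2: "n \<ge> 2"
    and mpos: "\<And>j. j \<in> {1..n} \<Longrightarrow> m j > 0"
    and onM: "\<And>t. p t \<in> Msurf \<sigma>"
    and d1: "\<And>t. (p has_vector_derivative p' t) (at t)"
    and d2: "\<And>t. (p' has_vector_derivative p'' t) (at t)"
    and cont2: "continuous_on UNIV p''"
    and period: "\<And>t. p (t + real n) = p t"
    and nocoll: "\<And>t k j. k \<in> {1..n} \<Longrightarrow> j \<in> {1..n} \<Longrightarrow> j \<noteq> k \<Longrightarrow>
        \<sigma> - \<sigma> * (odot \<sigma> (p (t + real k)) (p (t + real j)))^2 > 0"
    and ode: "\<And>t k. k \<in> {1..n} \<Longrightarrow>
        p'' (t + real k) =
          (\<Sum>j\<in>{1..n} - {k}.
             (m j / (\<sigma> - \<sigma> * (odot \<sigma> (p (t + real k)) (p (t + real j)))^2) powr (3/2)) *\<^sub>R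
             (p (t + real j) - (\<sigma> * odot \<sigma> (p (t + real k)) (p (t + real j))) *\<^sub>R p (t + real k)))
          - (\<sigma> * odot \<sigma> (p' (t + real k)) (p' (t + real k))) *\<^sub>R p (t + real k)"
  shows "\<forall>k\<in>{1..n}. \<forall>t. 0 =
      (\<Sum>j\<in>{1..n-1}.
         ((mcyc n m (j + k) - (\<Sum>i\<in>{1..n}. m i) / real n) /
            (\<sigma> - \<sigma> * (odot \<sigma> (p (t + real j)) (p t))^2) powr (3/2)) *\<^sub>R
         (p (t + real j) - (\<sigma> * odot \<sigma> (p (t + real j)) (p t)) *\<^sub>R p t))"
proof (intro ballI allI)
  fix k t
  assume k: "k \<in> {1..n}"
  have "(\<Sum>l\<in>{1..n-1}. (mcyc n m (l + k) - (\<Sum>i\<in>{1..n}. m i) / real n) *\<^sub>R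
            attraction \<sigma> (p t) (p (t + real l))) = 0"
  proof (rule sum_centered_shifted_weights_eq_0)
    show "0 < n"
      using n2 by simp
    show "(\<Sum>l\<in>{1..n-1}. mcyc n m (l + k') *\<^sub>R attraction \<sigma> (p t) (p (t + real l)))
            = p'' t + (\<sigma> * odot \<sigma> (p' t) (p' t)) *\<^sub>R p t" if "k' \<in> {1..n}" for k'
      using choreography_acceleration[OF period ode that] by simp
    show "(\<Sum>k'=1..n. mcyc n m (l + k')) = (\<Sum>i=1..n. m i)" for l
      by (rule sum_mcyc_window)
  qed (fact k)
  moreover have "\<And>j. odot \<sigma> (p (t + real j)) (p t) = odot \<sigma> (p t) (p (t + real j))"
    by (rule odot_commute)
  ultimately show "0 = (\<Sum>j\<in>{1..n-1}.
         ((mcyc n m (j + k) - (\<Sum>i\<in>{1..n}. m i) / real n) /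
            (\<sigma> - \<sigma> * (odot \<sigma> (p (t + real j)) (p t))^2) powr (3/2)) *\<^sub>R
         (p (t + real j) - (\<sigma> * odot \<sigma> (p (t + real j)) (p t)) *\<^sub>R p t))"
    by (simp add: scaleR_attraction)
qed

end
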